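(* Let $1\le p\le2$, $A\in\mathbb{R}^{m\times n}$, let $\bar{x}\in\mathbb{R}^n$ have exactly $S\ge1$ nonzero groups, $b:=A\bar{x}$, and suppose the $(p,1/2)$-GREC$(S,S)$ holds. Let $\lambda>0$ and let $x^*$ be a global minimizer of $\|Ax-b\|_2^2+\lambda\|x\|_{p,1/2}^{1/2}$. Then $\|x^*-\bar{x}\|_2^2\le 2\lambda^{4/3}S/\phi_{p,1/2}^{8/3}(S,S)$; in particular $\|x^*-\bar{x}\|_2^2=O(\lambda^{4/3}S)$.
   Context: Group structure: $\{1,\dots,n\}$ is partitioned into disjoint nonempty index sets $\mathcal{G}_1,\dots,\mathcal{G}_r$; $x_{\mathcal{G}_i}$ is the subvector indexed by $\mathcal{G}_i$. For $\mathcal{J}\subseteq\{1,\dots,r\}$, $\|x_{\mathcal{G}_{\mathcal{J}}}\|_{p,q}:=(\sum_{i\in\mathcal{J}}\|x_{\mathcal{G}_i}\|_p^q)^{1/q}$ and $\|x\|_{p,q}:=\|x_{\mathcal{G}_{\{1,\dots,r\}}}\|_{p,q}$. For $\mathcal{J}\subseteq\{1,\dots,r\}$ and integer $N$, $\mathcal{J}(x;N)$ is the set of the $N$ indices $i\in\mathcal{J}^c$ with the largest $\|x_{\mathcal{G}_i}\|_p$ (ties broken arbitrarily). $\phi_{p,q}(S,N):=\inf\{\|Ax\|_2/\|x_{\mathcal{G}_{\mathcal{N}}}\|_{p,2}: x\ne0,\ |\mathcal{J}|\le S,\ \|x_{\mathcal{G}_{\mathcal{J}^c}}\|_{p,q}\le\|x_{\mathcal{G}_{\mathcal{J}}}\|_{p,q},\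 \mathcal{N}=\mathcal{J}(x;N)\cup\mathcal{J}\}$; the $(p,q)$-GREC$(S,N)$ holds if $\phi_{p,q}(S,N)>0$. *)

theory Defs
  imports "HOL-Analysis.Analysis"
begin

definition group_partition :: "nat \<Rightarrow> (nat \<Rightarrow> 'n set) \<Rightarrow> bool" where
  "group_partition r G \<longleftrightarrow>
     (\<forall>i<r. G i \<noteq> {}) \<and>
     (\<forall>i<r. \<forall>j<r. i \<noteq> j \<longrightarrow> G i \<inter> G j = {}) \<and>
     (\<Union>i<r. G i) = UNIV"

definition gnorm :: "real \<Rightarrow> 'n set \<Rightarrow> real ^ 'n::finite \<Rightarrow> real" where
  "gnorm p I x = (\<Sum>j\<in>I. \<bar>x $ j\<bar> powr p) powr (1 / p)"

definition pq_norm :: "real \<Rightarrow> real \<Rightarrow> (nat \<Rightarrow> 'n set) \<Rightarrow> nat set \<Rightarrow> real ^ 'n::finite \<Rightarrow> real" where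
  "pq_norm p q G J x = (\<Sum>i\<in>J. gnorm p (G i) x powr q) powr (1 / q)"

text \<open>K is an admissible choice of J(x;N): N indices of J^c (within {0..<r}) with the largest
  group norms (ties broken arbitrarily; if J^c has fewer than N elements, all of it).\<close>
definition top_groups ::
  "nat \<Rightarrow> (nat \<Rightarrow> 'n set) \<Rightarrow> real \<Rightarrow> nat set \<Rightarrow> real ^ 'n::finite \<Rightarrow> nat \<Rightarrow> nat set \<Rightarrow> bool" where
  "top_groups r G p J x N K \<longleftrightarrow>
     K \<subseteq> {..<r} - J \<and> card K = min N (card ({..<r} - J)) \<and>
     (\<forall>i\<in>K. \<forall>k\<in>({..<r} - J) - K. gnorm p (G k) x \<le> gnorm p (G i) x)"

definition grec_phi ::
  "real ^ 'n::finite ^ 'm::finite \<Rightarrow> nat \<Rightarrow> (nat \<Rightarrow> 'n set) \<Rightarrow> real \<Rightarrow> real \<Rightarrow> nat \<Rightarrow> nat \<Rightarrow> real" where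
  "grec_phi A r G p q S N = Inf {norm (A *v x) / pq_norm p 2 G (K \<union> J) x | x J K.
       x \<noteq> 0 \<and> J \<subseteq> {..<r} \<and> card J \<le> S \<and>
       pq_norm p q G ({..<r} - J) x \<le> pq_norm p q G J x \<and>
       top_groups r G p J x N K}"

definition GREC :: "real ^ 'n::finite ^ 'm::finite \<Rightarrow> nat \<Rightarrow> (nat \<Rightarrow> 'n set) \<Rightarrow> real \<Rightarrow> real \<Rightarrow> nat \<Rightarrow> nat \<Rightarrow> bool" where
  "GREC A r G p q S N \<longleftrightarrow> grec_phi A r G p q S N > 0"

definition nonzero_groups :: "nat \<Rightarrow> (nat \<Rightarrow> 'n set) \<Rightarrow> real ^ 'n::finite \<Rightarrow> nat set" where
  "nonzero_groups r G x = {i. i < r \<and> (\<exists>j\<in>G i. x $ j \<noteq> 0)}"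

end

theory Submission
  imports Defs
begin

text \<open>Let d = xstar - xbar, let J be the set of support groups of xbar and t_i = ||d_{G_i}||_p^(1/2).
  Comparing the objective at xstar and at xbar, with the triangle inequality on the groups of J,
  gives the basic inequality ||A d||^2 + lam * sum_{J^c} t_i <= lam * sum_J t_i. Hence d lies in the
  cone of the GREC condition, and for N = J together with the S largest groups outside J,
  phi^2 * sum_N t_i^4 <= ||A d||^2 <= lam * sum_J t_i <= lam * S^(3/4) * (sum_N t_i^4)^(1/4),
  i.e. sum_N t_i^4 <= lam^(4/3) S / phi^(8/3). Each group outside N is dominated by the average of
  the S largest ones, which bounds the remaining part of sum_i t_i^4 by the same quantity.
  Finally p <= 2 gives ||d||_2^2 <= sum_i t_i^4.\<close>

lemma convex_on_powr_nonneg: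
  fixes p :: real
  assumes "1 \<le> p"
  shows "convex_on {0..} (\<lambda>x. x powr p)"
proof (rule convex_onI)
  fix t x y :: real
  assume t: "0 < t" "t < 1" and xy: "x \<in> {0..}" "y \<in> {0..}"
  have shrink: "(c * z) powr p \<le> c * z powr p" if "0 \<le> c" "c \<le> 1" "0 \<le> z" for c z :: real
  proof -
    have "c powr p \<le> c powr 1"
      using that powr_mono'[OF assms, of c] by (cases "c = 0") auto
    then show ?thesis
      using that by (simp add: powr_mult mult_right_mono)
  qed
  consider "x = 0" | "y = 0" | "0 < x" "0 < y"
    using xy by fastforce
  then show "((1 - t) *\<^sub>R x + t *\<^sub>R y) powr p \<le> (1 - t) * x powr p + t * y powr p"
  proof cases
    case 3
    then show ?thesis
      using convex_onD[OF powr_convex[OF assms], of t x y] t by simp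
  qed (use t xy shrink in auto)
qed (simp add: convex_real_interval)

lemma sum_power4_le:
  fixes f :: "'a \<Rightarrow> real"
  shows "(\<Sum>i\<in>I. f i) ^ 4 \<le> real (card I) ^ 3 * (\<Sum>i\<in>I. f i ^ 4)"
proof -
  have "(\<Sum>i\<in>I. f i) ^ 4 = ((\<Sum>i\<in>I. f i)\<^sup>2)\<^sup>2"
    by simp
  also have "\<dots> \<le> ((\<Sum>i\<in>I. (f i)\<^sup>2) * card I)\<^sup>2"
    by (intro power_mono sum_squared_le_sum_of_squares) auto
  also have "\<dots> = (\<Sum>i\<in>I. (f i)\<^sup>2)\<^sup>2 * card I ^ 2"
    by (simp add: power_mult_distrib)
  also have "\<dots> \<le> (\<Sum>i\<in>I. ((f i)\<^sup>2)\<^sup>2) * card I * card I ^ 2"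
    by (intro mult_right_mono sum_squared_le_sum_of_squares) auto
  also have "\<dots> = real (card I) ^ 3 * (\<Sum>i\<in>I. f i ^ 4)"
    by (simp add: eval_nat_numeral algebra_simps flip: power_mult)
  finally show ?thesis .
qed

lemma exists_top_subset:
  fixes f :: "'a \<Rightarrow> 'b::linorder"
  assumes "finite U"
  shows "\<exists>K\<subseteq>U. card K = min n (card U) \<and> (\<forall>i\<in>K. \<forall>k\<in>U - K. f k \<le> f i)"
proof (induction n)
  case 0
  show ?case by auto
next
  case (Suc n)
  then obtain K where K: "K \<subseteq> U" "card K = min n (card U)" "\<forall>i\<in>K. \<forall>k\<in>U - K. f k \<le> f i"
    by blast
  show ?case
  proof (cases "K = U")
    case True
    then show ?thesis using K by auto
  next
    case False
    then have "U - K \<noteq> {}" "card K < card U"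
      using K(1) assms by (auto intro: psubset_card_mono)
    then have "Max (f ` (U - K)) \<in> f ` (U - K)"
      using assms by (intro Max_in) auto
    then obtain k0 where k0: "k0 \<in> U - K" "f k0 = Max (f ` (U - K))"
      by auto
    have k0_max: "\<forall>k\<in>U - K. f k \<le> f k0"
      using k0(2) assms by simp
    have "card (insert k0 K) = min (Suc n) (card U)"
      using K \<open>card K < card U\<close> k0(1) assms by (auto simp: finite_subset)
    then show ?thesis
      using K k0 k0_max by (intro exI[of _ "insert k0 K"]) auto
  qed
qed

lemma sum_power4_tail_le:
  fixes s :: "'a \<Rightarrow> real"
  assumes "finite K" "card K = n" "0 < n" "\<And>i. 0 \<le> s i"
    and top: "\<forall>i\<in>K. \<forall>k\<in>R. s k \<le> s i"
    and tail: "(\<Sum>k\<in>R. s k) ^ 4 \<le> real n ^ 3 * P"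
    and head: "(\<Sum>i\<in>K. s i ^ 4) \<le> P"
  shows "(\<Sum>k\<in>R. s k ^ 4) \<le> P"
proof -
  define X m where "X = (\<Sum>i\<in>K. s i)" and "m = X / n"
  have "0 \<le> X" "0 \<le> P"
    using assms(4) head by (auto simp: X_def sum_nonneg intro: order_trans[OF _ head])
  have below_mean: "s k \<le> m" if "k \<in> R" for k
  proof -
    have "real n * s k \<le> X"
      using sum_mono[of K "\<lambda>_. s k" s] top that assms(2) by (auto simp: X_def)
    then show ?thesis
      using assms(3) by (simp add: m_def field_simps)
  qed
  have "(\<Sum>k\<in>R. s k ^ 4) \<le> (\<Sum>k\<in>R. m ^ 3 * s k)"
  proof (rule sum_mono)
    fix k assume "k \<in> R"
    then have "s k ^ 3 * s k \<le> m ^ 3 * s k"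
      using below_mean[of k] assms(4)[of k] by (intro mult_right_mono power_mono) auto
    then show "s k ^ 4 \<le> m ^ 3 * s k"
      by (simp add: eval_nat_numeral)
  qed
  also have "\<dots> = X ^ 3 * (\<Sum>k\<in>R. s k) / real n ^ 3"
    by (simp add: m_def power_divide sum_distrib_left sum_divide_distrib)
  also have "\<dots> \<le> P"
  proof -
    have "X ^ 4 \<le> real n ^ 3 * P"
      using sum_power4_le[of s K] head assms(2) by (simp add: X_def order_trans mult_left_mono)
    have "(X ^ 3 * (\<Sum>k\<in>R. s k)) ^ 4 = (X ^ 4) ^ 3 * (\<Sum>k\<in>R. s k) ^ 4"
      by (simp add: power_mult_distrib flip: power_mult)
    also have "\<dots> \<le> (real n ^ 3 * P) ^ 3 * (real n ^ 3 * P)"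
      using \<open>X ^ 4 \<le> real n ^ 3 * P\<close> tail \<open>0 \<le> X\<close> \<open>0 \<le> P\<close>
      by (intro mult_mono power_mono) auto
    also have "\<dots> = (real n ^ 3 * P) ^ 4"
      by (simp add: eval_nat_numeral)
    finally have "X ^ 3 * (\<Sum>k\<in>R. s k) \<le> real n ^ 3 * P"
      using \<open>0 \<le> P\<close> power_le_imp_le_base[of _ 3] by fastforce
    then show ?thesis
      using assms(3) by (simp add: divide_le_eq mult.commute)
  qed
  finally show ?thesis .
qed

lemma le_lam_powr_four_thirds:
  fixes phi lam S P Y :: real
  assumes "0 < phi" "0 < lam" "0 \<le> S" "0 \<le> P"
    and "phi\<^sup>2 * P \<le> lam * Y" "Y ^ 4 \<le> S ^ 3 * P"
  shows "P \<le> lam powr (4/3) * S / phi powr (8/3)"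
proof (cases "P = 0")
  case False
  define c where "c = lam powr (4/3) * S / phi powr (8/3)"
  have "0 \<le> c"
    using assms by (simp add: c_def)
  have "(phi\<^sup>2 * P) ^ 4 \<le> (lam * Y) ^ 4"
    using assms by (intro power_mono) auto
  also have "\<dots> \<le> lam ^ 4 * (S ^ 3 * P)"
    using assms by (simp add: power_mult_distrib mult_left_mono)
  finally have "(phi ^ 8 * P ^ 3) * P \<le> (lam ^ 4 * S ^ 3) * P"
    by (simp add: power_mult_distrib algebra_simps eval_nat_numeral)
  then have "P ^ 3 \<le> lam ^ 4 * S ^ 3 / phi ^ 8"
    using False assms(1,4) by (simp add: field_simps)
  also have "\<dots> = c ^ 3"
  proof -
    have "(lam powr (4/3)) ^ 3 = lam ^ 4" "(phi powr (8/3)) ^ 3 = phi ^ 8"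
      using assms(1,2) by (simp_all add: powr_power)
    then show ?thesis
      by (simp add: c_def power_mult_distrib power_divide)
  qed
  finally show ?thesis
    using \<open>0 \<le> c\<close> power_le_imp_le_base[of P 2 c] by (simp add: c_def eval_nat_numeral)
qed (use assms in simp)

lemma sum_power2_le_of_cone_and_grec:
  fixes g :: "'a \<Rightarrow> real" and S :: nat
  assumes g: "\<And>i. 0 \<le> g i"
    and J: "finite J" "card J = S" "0 < S"
    and Jc: "finite Jc" "J \<inter> Jc = {}"
    and K: "K \<subseteq> Jc" "card K = min S (card Jc)" "\<forall>i\<in>K. \<forall>k\<in>Jc - K. g k \<le> g i"
    and cone: "(\<Sum>i\<in>Jc. sqrt (g i)) \<le> (\<Sum>i\<in>J. sqrt (g i))"
    and grec: "phi\<^sup>2 * (\<Sum>i\<in>K \<union> J. (g i)\<^sup>2) \<le> lam * (\<Sum>i\<in>J. sqrt (g i))"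
    and pos: "0 < phi" "0 < lam"
  shows "(\<Sum>i\<in>J \<union> Jc. (g i)\<^sup>2) \<le> 2 * lam powr (4/3) * S / phi powr (8/3)"
proof -
  define s where "s i = sqrt (g i)" for i
  define P Y where "P = (\<Sum>i\<in>K \<union> J. (g i)\<^sup>2)" and "Y = (\<Sum>i\<in>J. s i)"
  have s: "0 \<le> s i" "s i ^ 4 = (g i)\<^sup>2" for i
    using g[of i] power_mult[of "sqrt (g i)" 2 2] by (simp_all add: s_def)
  have "finite (K \<union> J)"
    using J(1) Jc(1) K(1) finite_subset by blast
  then have head: "(\<Sum>i\<in>I. (g i)\<^sup>2) \<le> P" if "I \<subseteq> K \<union> J" for I
    unfolding P_def using that by (intro sum_mono2) auto
  have "0 \<le> P"
    by (simp add: P_def sum_nonneg)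
  have Y4: "Y ^ 4 \<le> real S ^ 3 * P"
    using sum_power4_le[of s J] head[of J] J(2) by (simp add: Y_def s mult_left_mono order_trans)
  have P_le: "P \<le> lam powr (4/3) * S / phi powr (8/3)"
    using grec Y4 pos \<open>0 \<le> P\<close>
    by (intro le_lam_powr_four_thirds[where Y = Y]) (auto simp: P_def Y_def s_def)
  have tail: "(\<Sum>i\<in>Jc - K. (g i)\<^sup>2) \<le> P"
  proof (cases "Jc - K = {}")
    case True
    then show ?thesis
      using \<open>0 \<le> P\<close> by (metis sum.empty)
  next
    case False
    then have "card K < card Jc"
      using K(1) Jc(1) by (metis Diff_eq_empty_iff psubsetI psubset_card_mono)
    then have "card K = S"
      using K(2) by simp
    have "(\<Sum>i\<in>Jc - K. s i) ^ 4 \<le> Y ^ 4"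
      using cone s(1) Jc(1) sum_mono2[of Jc "Jc - K" s]
      by (intro power_mono) (auto simp: Y_def s_def sum_nonneg)
    have "(\<Sum>i\<in>Jc - K. s i ^ 4) \<le> P"
    proof (rule sum_power4_tail_le[of K S s])
      show "finite K"
        using Jc(1) K(1) finite_subset by blast
      show "\<forall>i\<in>K. \<forall>k\<in>Jc - K. s k \<le> s i"
        using K(3) by (simp add: s_def)
      show "(\<Sum>k\<in>Jc - K. s k) ^ 4 \<le> real S ^ 3 * P"
        using \<open>(\<Sum>i\<in>Jc - K. s i) ^ 4 \<le> Y ^ 4\<close> Y4 by linarith
      show "(\<Sum>i\<in>K. s i ^ 4) \<le> P"
        using head[of K] by (simp add: s)
    qed (use \<open>card K = S\<close> J(3) s(1) in auto)
    then show ?thesis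
      by (simp add: s)
  qed
  have "J \<union> Jc = (K \<union> J) \<union> (Jc - K)" "(K \<union> J) \<inter> (Jc - K) = {}"
    using K(1) Jc(2) by auto
  then have "(\<Sum>i\<in>J \<union> Jc. (g i)\<^sup>2) = P + (\<Sum>i\<in>Jc - K. (g i)\<^sup>2)"
    using \<open>finite (K \<union> J)\<close> Jc(1) by (simp add: P_def sum.union_disjoint)
  then show ?thesis
    using P_le tail by simp
qed

lemma gnorm_nonneg: "0 \<le> gnorm p I x"
  by (simp add: gnorm_def)

lemma gnorm_powr:
  assumes "0 < p"
  shows "gnorm p I x powr p = (\<Sum>j\<in>I. \<bar>x $ j\<bar> powr p)"
  using assms by (simp add: gnorm_def powr_powr sum_nonneg)

lemma gnorm_eq_0_iff:
  assumes "0 < p"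
  shows "gnorm p I x = 0 \<longleftrightarrow> (\<forall>j\<in>I. x $ j = 0)"
proof -
  have "gnorm p I x = 0 \<longleftrightarrow> (\<Sum>j\<in>I. \<bar>x $ j\<bar> powr p) = 0"
    using gnorm_powr[OF assms, of I x] assms by (auto simp: gnorm_def)
  also have "\<dots> \<longleftrightarrow> (\<forall>j\<in>I. x $ j = 0)"
    by (subst sum_nonneg_eq_0_iff) auto
  finally show ?thesis .
qed

lemma gnorm_cong: "(\<And>j. j \<in> I \<Longrightarrow> x $ j = y $ j) \<Longrightarrow> gnorm p I x = gnorm p I y"
  unfolding gnorm_def by (metis (no_types, lifting) sum.cong)

lemma gnorm_uminus [simp]: "gnorm p I (- x) = gnorm p I x"
  by (simp add: gnorm_def)

lemma gnorm_triangle: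
  assumes "1 \<le> p"
  shows "gnorm p I (x + y) \<le> gnorm p I x + gnorm p I y"
proof -
  have "0 < p" using assms by simp
  consider "gnorm p I x = 0" | "gnorm p I y = 0" | "0 < gnorm p I x" "0 < gnorm p I y"
    using gnorm_nonneg[of p I x] gnorm_nonneg[of p I y] by argo
  then show ?thesis
  proof cases
    case 1
    then have "\<forall>j\<in>I. x $ j = 0"
      using gnorm_eq_0_iff[OF \<open>0 < p\<close>] by blast
    then have "gnorm p I (x + y) = gnorm p I y"
      by (auto intro: gnorm_cong)
    with 1 show ?thesis by simp
  next
    case 2
    then have "\<forall>j\<in>I. y $ j = 0"
      using gnorm_eq_0_iff[OF \<open>0 < p\<close>] by blast
    then have "gnorm p I (x + y) = gnorm p I x"
      by (auto intro: gnorm_cong)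
    with 2 show ?thesis by simp
  next
    case 3
    define a b where "a = gnorm p I x" and "b = gnorm p I y"
    note ab = 3[folded a_def b_def]
    define t where "t = b / (a + b)"
    have t: "0 \<le> t" "t \<le> 1" "(a + b) * (1 - t) = a" "(a + b) * t = b"
      using ab by (auto simp: t_def field_simps)
    \<comment> \<open>\<open>x + y\<close> is \<open>a + b\<close> times a convex combination of \<open>x / a\<close> and \<open>y / b\<close>, whose
       \<open>p\<close>-th power sums are \<open>1\<close>.\<close>
    have pointwise: "\<bar>(x + y) $ j\<bar> powr p
        \<le> (a + b) powr p * ((1 - t) * (\<bar>x $ j\<bar> / a) powr p + t * (\<bar>y $ j\<bar> / b) powr p)" for j
    proof -
      have "(a + b) * ((1 - t) * (\<bar>x $ j\<bar> / a) + t * (\<bar>y $ j\<bar> / b))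
          = ((a + b) * (1 - t)) * \<bar>x $ j\<bar> / a + ((a + b) * t) * \<bar>y $ j\<bar> / b"
        by (simp add: algebra_simps)
      also have "\<dots> = \<bar>x $ j\<bar> + \<bar>y $ j\<bar>"
        using ab unfolding t(3,4) by simp
      finally have "\<bar>(x + y) $ j\<bar> \<le> (a + b) * ((1 - t) * (\<bar>x $ j\<bar> / a) + t * (\<bar>y $ j\<bar> / b))"
        by (simp add: abs_triangle_ineq)
      then have "\<bar>(x + y) $ j\<bar> powr p \<le> ((a + b) * ((1 - t) * (\<bar>x $ j\<bar> / a) + t * (\<bar>y $ j\<bar> / b))) powr p"
        using \<open>0 < p\<close> by (intro powr_mono2) auto
      also have "\<dots> = (a + b) powr p * ((1 - t) * (\<bar>x $ j\<bar> / a) + t * (\<bar>y $ j\<bar> / b)) powr p"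
        using ab t(1,2) by (subst powr_mult) auto
      also have "\<dots> \<le> (a + b) powr p * ((1 - t) * (\<bar>x $ j\<bar> / a) powr p + t * (\<bar>y $ j\<bar> / b) powr p)"
        using convex_onD[OF convex_on_powr_nonneg[OF assms], of t "\<bar>x $ j\<bar> / a" "\<bar>y $ j\<bar> / b"] t(1,2) ab
        by (intro mult_left_mono) auto
      finally show ?thesis .
    qed
    have unit: "(\<Sum>j\<in>I. (\<bar>z $ j\<bar> / c) powr p) = 1" if "c = gnorm p I z" "0 < c" for z c
    proof -
      have "(\<Sum>j\<in>I. (\<bar>z $ j\<bar> / c) powr p) = (\<Sum>j\<in>I. \<bar>z $ j\<bar> powr p) / c powr p"
        using that(2) by (simp add: powr_divide sum_divide_distrib)
      also have "\<dots> = c powr p / c powr p"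
        unfolding that(1) gnorm_powr[OF \<open>0 < p\<close>] ..
      finally show ?thesis
        using that(2) by simp
    qed
    have "gnorm p I (x + y) powr p = (\<Sum>j\<in>I. \<bar>(x + y) $ j\<bar> powr p)"
      by (rule gnorm_powr[OF \<open>0 < p\<close>])
    also have "\<dots> \<le> (\<Sum>j\<in>I. (a + b) powr p * ((1 - t) * (\<bar>x $ j\<bar> / a) powr p + t * (\<bar>y $ j\<bar> / b) powr p))"
      by (rule sum_mono) (rule pointwise)
    also have "\<dots> = (a + b) powr p * ((1 - t) * (\<Sum>j\<in>I. (\<bar>x $ j\<bar> / a) powr p)
                                        + t * (\<Sum>j\<in>I. (\<bar>y $ j\<bar> / b) powr p))"
      by (simp add: sum_distrib_left sum.distrib distrib_left)
    also have "\<dots> = (a + b) powr p"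
      unfolding unit[OF a_def ab(1)] unit[OF b_def ab(2)] by simp
    finally have bound: "gnorm p I (x + y) powr p \<le> (a + b) powr p" .
    show ?thesis
    proof (rule ccontr)
      assume "\<not> ?thesis"
      then have "(a + b) powr p < gnorm p I (x + y) powr p"
        using ab \<open>0 < p\<close> by (intro powr_less_mono2) (auto simp: a_def b_def)
      then show False
        using bound by simp
    qed
  qed
qed

lemma sum_power2_le_gnorm_power2:
  assumes "0 < p" "p \<le> 2"
  shows "(\<Sum>j\<in>I. (x $ j)\<^sup>2) \<le> (gnorm p I x)\<^sup>2"
proof (cases "gnorm p I x = 0")
  case True
  then have "\<forall>j\<in>I. x $ j = 0"
    using gnorm_eq_0_iff[OF assms(1)] by blast
  then show ?thesis by simp
next
  case False
  define a where "a = gnorm p I x"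
  have "0 < a" using False gnorm_nonneg a_def by (metis less_eq_real_def)
  \<comment> \<open>Each |x_j| is at most a, so x_j^2 = |x_j|^p * |x_j|^(2-p) <= |x_j|^p * a^(2-p).\<close>
  have coord: "\<bar>x $ j\<bar> \<le> a" if "j \<in> I" for j
  proof -
    have "\<bar>x $ j\<bar> powr p \<le> (\<Sum>j\<in>I. \<bar>x $ j\<bar> powr p)"
      using that by (intro member_le_sum) auto
    then have "\<bar>x $ j\<bar> powr p \<le> a powr p"
      unfolding a_def gnorm_powr[OF assms(1)] .
    then show ?thesis
      using assms \<open>0 < a\<close> powr_less_mono2[of p a "\<bar>x $ j\<bar>"] by linarith
  qed
  have "(x $ j)\<^sup>2 \<le> \<bar>x $ j\<bar> powr p * a powr (2 - p)" if "j \<in> I" for j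
  proof (cases "x $ j = 0")
    case False
    have "(x $ j)\<^sup>2 = \<bar>x $ j\<bar> powr (p + (2 - p))"
      by (simp add: powr_numeral)
    also have "\<dots> = \<bar>x $ j\<bar> powr p * \<bar>x $ j\<bar> powr (2 - p)"
      by (rule powr_add)
    also have "\<dots> \<le> \<bar>x $ j\<bar> powr p * a powr (2 - p)"
      using coord[OF that] assms by (intro mult_left_mono powr_mono2) auto
    finally show ?thesis .
  qed simp
  then have "(\<Sum>j\<in>I. (x $ j)\<^sup>2) \<le> (\<Sum>j\<in>I. \<bar>x $ j\<bar> powr p) * a powr (2 - p)"
    by (simp add: sum_distrib_right sum_mono)
  also have "\<dots> = a powr (p + (2 - p))"
    unfolding powr_add a_def gnorm_powr[OF assms(1)] ..
  also have "\<dots> = a\<^sup>2"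
    using \<open>0 < a\<close> by (simp add: powr_numeral)
  finally show ?thesis by (simp add: a_def)
qed

lemma norm_power2_le_sum_gnorm_power2:
  fixes d :: "real ^ 'n::finite"
  assumes "group_partition r G" "0 < p" "p \<le> 2"
  shows "(norm d)\<^sup>2 \<le> (\<Sum>i<r. (gnorm p (G i) d)\<^sup>2)"
proof -
  have cover: "(\<Union>i<r. G i) = UNIV" and disjoint: "\<forall>i<r. \<forall>j<r. i \<noteq> j \<longrightarrow> G i \<inter> G j = {}"
    using assms(1) by (simp_all add: group_partition_def)
  have "(norm d)\<^sup>2 = (\<Sum>j\<in>(\<Union>i<r. G i). (d $ j)\<^sup>2)"
    by (simp add: cover norm_vec_def L2_set_def sum_nonneg)
  also have "\<dots> = (\<Sum>i<r. \<Sum>j\<in>G i. (d $ j)\<^sup>2)"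
    using disjoint by (intro sum.UNION_disjoint) auto
  also have "\<dots> \<le> (\<Sum>i<r. (gnorm p (G i) d)\<^sup>2)"
    using assms by (intro sum_mono sum_power2_le_gnorm_power2)
  finally show ?thesis .
qed

lemma pq_norm_half: "pq_norm p (1/2) G I x = (\<Sum>i\<in>I. sqrt (gnorm p (G i) x))\<^sup>2"
proof -
  have "(\<Sum>i\<in>I. gnorm p (G i) x powr (1/2)) = (\<Sum>i\<in>I. sqrt (gnorm p (G i) x))"
    by (simp add: powr_half_sqrt gnorm_nonneg)
  then show ?thesis
    by (simp add: pq_norm_def powr_numeral sum_nonneg gnorm_nonneg)
qed

lemma pq_norm_half_powr_half: "pq_norm p (1/2) G I x powr (1/2) = (\<Sum>i\<in>I. sqrt (gnorm p (G i) x))"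
  by (simp add: pq_norm_half powr_half_sqrt sum_nonneg gnorm_nonneg)

lemma pq_norm_two: "pq_norm p 2 G I x = sqrt (\<Sum>i\<in>I. (gnorm p (G i) x)\<^sup>2)"
proof -
  have "(\<Sum>i\<in>I. gnorm p (G i) x powr 2) = (\<Sum>i\<in>I. (gnorm p (G i) x)\<^sup>2)"
    by (simp add: powr_numeral gnorm_nonneg)
  then show ?thesis
    by (simp add: pq_norm_def powr_half_sqrt sum_nonneg)
qed

lemma top_groups_exists: "\<exists>K. top_groups r G p J x N K"
  using exists_top_subset[of "{..<r} - J" N "\<lambda>i. gnorm p (G i) x"]
  by (auto simp: top_groups_def)

lemma grec_phi_mult_le:
  assumes "x \<noteq> 0" "J \<subseteq> {..<r}" "card J \<le> S"
    and "pq_norm p q G ({..<r} - J) x \<le> pq_norm p q G J x"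
    and "top_groups r G p J x N K"
  shows "grec_phi A r G p q S N * pq_norm p 2 G (K \<union> J) x \<le> norm (A *v x)"
proof (cases "pq_norm p 2 G (K \<union> J) x = 0")
  case False
  have "grec_phi A r G p q S N \<le> norm (A *v x) / pq_norm p 2 G (K \<union> J) x"
    unfolding grec_phi_def
  proof (rule cInf_lower)
    show "bdd_below {norm (A *v x) / pq_norm p 2 G (K \<union> J) x | x J K.
        x \<noteq> 0 \<and> J \<subseteq> {..<r} \<and> card J \<le> S \<and>
        pq_norm p q G ({..<r} - J) x \<le> pq_norm p q G J x \<and> top_groups r G p J x N K}"
      by (rule bdd_belowI[of _ 0]) (auto simp: pq_norm_def)
  qed (use assms in blast)
  moreover have "0 < pq_norm p 2 G (K \<union> J) x"
    using False by (simp add: pq_norm_def)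
  ultimately show ?thesis
    by (simp add: pos_le_divide_eq)
qed simp

lemma grec_phi_power2_mult_le:
  assumes "x \<noteq> 0" "J \<subseteq> {..<r}" "card J \<le> S" "0 \<le> grec_phi A r G p (1/2) S N"
    and cone: "(\<Sum>i\<in>{..<r} - J. sqrt (gnorm p (G i) x)) \<le> (\<Sum>i\<in>J. sqrt (gnorm p (G i) x))"
    and "top_groups r G p J x N K"
  shows "(grec_phi A r G p (1/2) S N)\<^sup>2 * (\<Sum>i\<in>K \<union> J. (gnorm p (G i) x)\<^sup>2) \<le> (norm (A *v x))\<^sup>2"
proof -
  have "pq_norm p (1/2) G ({..<r} - J) x \<le> pq_norm p (1/2) G J x"
    unfolding pq_norm_half using cone by (intro power_mono) (simp_all add: gnorm_nonneg sum_nonneg)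
  then have "grec_phi A r G p (1/2) S N * sqrt (\<Sum>i\<in>K \<union> J. (gnorm p (G i) x)\<^sup>2) \<le> norm (A *v x)"
    using grec_phi_mult_le[OF assms(1-3) _ assms(6)] by (simp add: pq_norm_two)
  then have "(grec_phi A r G p (1/2) S N * sqrt (\<Sum>i\<in>K \<union> J. (gnorm p (G i) x)\<^sup>2))\<^sup>2 \<le> (norm (A *v x))\<^sup>2"
    using assms(4) by (intro power_mono) (auto simp: sum_nonneg)
  then show ?thesis
    by (simp add: power_mult_distrib sum_nonneg)
qed

lemma group_sqrt_penalty_basic_inequality:
  fixes A :: "real ^ 'n::finite ^ 'm::finite" and xbar xstar :: "real ^ 'n"
    and G :: "nat \<Rightarrow> 'n set" and r :: nat
  defines "J \<equiv> nonzero_groups r G xbar"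
  assumes "1 \<le> p" "0 \<le> lam"
    and opt: "(norm (A *v (xstar - xbar)))\<^sup>2 + lam * (\<Sum>i<r. sqrt (gnorm p (G i) xstar))
              \<le> lam * (\<Sum>i<r. sqrt (gnorm p (G i) xbar))"
  shows "(norm (A *v (xstar - xbar)))\<^sup>2 + lam * (\<Sum>i\<in>{..<r} - J. sqrt (gnorm p (G i) (xstar - xbar)))
           \<le> lam * (\<Sum>i\<in>J. sqrt (gnorm p (G i) (xstar - xbar)))"
proof -
  define s where "s x i = sqrt (gnorm p (G i) x)" for x i
  have "J \<subseteq> {..<r}"
    by (auto simp: J_def nonzero_groups_def)
  then have split: "(\<Sum>i<r. f i) = (\<Sum>i\<in>J. f i) + (\<Sum>i\<in>{..<r} - J. f i)" for f :: "nat \<Rightarrow> real"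
    using sum.subset_diff[of J "{..<r}" f] by (simp add: add.commute)
  have off_support: "s xbar i = 0 \<and> s xstar i = s (xstar - xbar) i" if "i \<in> {..<r} - J" for i
  proof -
    have "\<forall>j\<in>G i. xbar $ j = 0"
      using that by (auto simp: J_def nonzero_groups_def)
    then show ?thesis
      using assms(2) by (auto simp: s_def gnorm_eq_0_iff intro: gnorm_cong)
  qed
  have on_support: "s xbar i \<le> s xstar i + s (xstar - xbar) i" for i
  proof -
    have "gnorm p (G i) xbar \<le> gnorm p (G i) xstar + gnorm p (G i) (xstar - xbar)"
      using gnorm_triangle[OF assms(2), of "G i" xstar "xbar - xstar"]
        gnorm_uminus[of p "G i" "xbar - xstar"] by simp
    then have "s xbar i \<le> sqrt (gnorm p (G i) xstar + gnorm p (G i) (xstar - xbar))"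
      by (simp add: s_def)
    also have "\<dots> \<le> s xstar i + s (xstar - xbar) i"
      unfolding s_def by (intro sqrt_add_le_add_sqrt gnorm_nonneg)
    finally show ?thesis .
  qed
  have "lam * (\<Sum>i\<in>J. s xbar i) \<le> lam * (\<Sum>i\<in>J. s xstar i) + lam * (\<Sum>i\<in>J. s (xstar - xbar) i)"
    using assms(3) by (simp add: on_support sum_mono mult_left_mono flip: sum.distrib distrib_left)
  moreover have off: "(\<Sum>i\<in>{..<r} - J. s xbar i) = 0"
    "(\<Sum>i\<in>{..<r} - J. s xstar i) = (\<Sum>i\<in>{..<r} - J. s (xstar - xbar) i)"
    using off_support by auto
  ultimately show ?thesis
    using opt unfolding split s_def[symmetric] distrib_left off by linarith
qed

theorem corollary2p2:
  fixes A :: "real ^ 'n::finite ^ 'm::finite"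
    and G :: "nat \<Rightarrow> 'n set" and r :: nat
    and p lam :: real and S :: nat
    and xbar xstar :: "real ^ 'n" and b :: "real ^ 'm"
  assumes part: "group_partition r G"
    and p: "1 \<le> p" "p \<le> 2"
    and S: "S \<ge> 1" "card (nonzero_groups r G xbar) = S"
    and b: "b = A *v xbar"
    and grec: "GREC A r G p (1/2) S S"
    and lam: "lam > 0"
    and min: "\<forall>x. norm (A *v xstar - b) ^ 2 + lam * pq_norm p (1/2) G {..<r} xstar powr (1/2)
                 \<le> norm (A *v x - b) ^ 2 + lam * pq_norm p (1/2) G {..<r} x powr (1/2)"
  shows "norm (xstar - xbar) ^ 2
           \<le> 2 * lam powr (4/3) * real S / grec_phi A r G p (1/2) S S powr (8/3)"
proof -
  define d J phi where "d = xstar - xbar" and "J = nonzero_groups r G xbar"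
    and "phi = grec_phi A r G p (1/2) S S"
  define g where "g i = gnorm p (G i) d" for i
  have "0 < phi"
    using grec by (simp add: GREC_def phi_def)
  have "J \<subseteq> {..<r}"
    by (auto simp: J_def nonzero_groups_def)
  have basic: "(norm (A *v d))\<^sup>2 + lam * (\<Sum>i\<in>{..<r} - J. sqrt (g i)) \<le> lam * (\<Sum>i\<in>J. sqrt (g i))"
    using group_sqrt_penalty_basic_inequality[OF p(1) less_imp_le[OF lam]] min[rule_format, of xbar]
    by (simp add: b d_def J_def g_def pq_norm_half_powr_half matrix_vector_mult_diff_distrib)
  have "0 \<le> lam * (\<Sum>i\<in>{..<r} - J. sqrt (g i))"
    using lam by (simp add: g_def gnorm_nonneg sum_nonneg)
  then have fit: "(norm (A *v d))\<^sup>2 \<le> lam * (\<Sum>i\<in>J. sqrt (g i))"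
    using basic by linarith
  have "lam * (\<Sum>i\<in>{..<r} - J. sqrt (g i)) \<le> lam * (\<Sum>i\<in>J. sqrt (g i))"
    using basic zero_le_power2[of "norm (A *v d)"] by linarith
  then have cone: "(\<Sum>i\<in>{..<r} - J. sqrt (g i)) \<le> (\<Sum>i\<in>J. sqrt (g i))"
    using lam by simp
  show ?thesis
  proof (cases "d = 0")
    case False
    obtain K where K: "top_groups r G p J d S K"
      using top_groups_exists by blast
    have "phi\<^sup>2 * (\<Sum>i\<in>K \<union> J. (g i)\<^sup>2) \<le> (norm (A *v d))\<^sup>2"
      unfolding phi_def g_def using S(2) K cone \<open>0 < phi\<close>
      by (intro grec_phi_power2_mult_le[OF False \<open>J \<subseteq> {..<r}\<close>]) (auto simp: J_def g_def phi_def)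
    then have restricted: "phi\<^sup>2 * (\<Sum>i\<in>K \<union> J. (g i)\<^sup>2) \<le> lam * (\<Sum>i\<in>J. sqrt (g i))"
      using fit by linarith
    have "(norm d)\<^sup>2 \<le> (\<Sum>i\<in>J \<union> ({..<r} - J). (g i)\<^sup>2)"
      using norm_power2_le_sum_gnorm_power2[OF part _ p(2), of d] p(1) \<open>J \<subseteq> {..<r}\<close>
      by (simp add: g_def Un_absorb1)
    moreover have "(\<Sum>i\<in>J \<union> ({..<r} - J). (g i)\<^sup>2) \<le> 2 * lam powr (4/3) * S / phi powr (8/3)"
      using K cone restricted S lam \<open>0 < phi\<close> \<open>J \<subseteq> {..<r}\<close> finite_subset
      by (intro sum_power2_le_of_cone_and_grec[of g J S "{..<r} - J" K])
        (auto simp: top_groups_def g_def gnorm_nonneg J_def)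
    ultimately show ?thesis
      by (simp add: d_def phi_def)
  qed (use lam \<open>0 < phi\<close> in \<open>simp add: d_def phi_def\<close>)
qed

end
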